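(* Let $(\mathbf{x}^1,y_l^1,y_r^1),\dots,(\mathbf{x}^T,y_l^T,y_r^T)$ be a sequence of examples with $\mathbf{x}^t\in\mathbb{R}^d$ and integers $1\le y_l^t\le y_r^t\le K$, and run the PA-II algorithm with parameter $C>0$ starting from $\mathbf{w}^1=\mathbf{0}$, $\boldsymbol\theta^1=\mathbf{0}$. Let $c=\min_{t\in[T]}(y_r^t-y_l^t)$, $R^2=\max_{t\in[T]}\Vert\mathbf{x}^t\Vert^2$, $D=1+\frac{1}{2C}+R^2(K-c-1)$, and let $\mathbf{v}=(\mathbf{u},\mathbf{b})$, $\mathbf{u}\in\mathbb{R}^d$, $\mathbf{b}\in\mathbb{R}^{K-1}$, be the parameters of an arbitrary predictor, $\Vert\mathbf{v}\Vert^2=\Vert\mathbf{u}\Vert^2+\Vert\mathbf{b}\Vert^2$. Then $$\sum_{t=1}^T\sum_{i=1}^{K-1}(l_i^t)^2\le D\left(\Vert\mathbf{v}\Vert^2+2C\sum_{t=1}^T\sum_{i=1}^{K-1}(l_i^{t*})^2\right).$$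
   Context: PA-II algorithm with parameter $C>0$: at trial $t$, with $I_t=\{1,\dots,y_l^t-1\}\cup\{y_r^t,\dots,K-1\}$, $(\mathbf{w}^{t+1},\boldsymbol\theta^{t+1})$ is the $(\mathbf{w},\boldsymbol\theta)$-part of the minimizer over $\mathbf{w},\boldsymbol\theta,(\xi_i)_{i\in I_t}$ of $\tfrac12\Vert\mathbf{w}-\mathbf{w}^t\Vert^2+\tfrac12\Vert\boldsymbol\theta-\boldsymbol\theta^t\Vert^2+C\sum_{i\in I_t}\xi_i^2$ subject to $\mathbf{w}\cdot\mathbf{x}^t-\theta_i\ge1-\xi_i$ ($i\le y_l^t-1$) and $\mathbf{w}\cdot\mathbf{x}^t-\theta_i\le-1+\xi_i$ ($i\ge y_r^t$). Losses of the algorithm: $l_i^t=\max(0,1+\theta_i^t-\mathbf{w}^t\cdot\mathbf{x}^t)$ for $1\le i\le y_l^t-1$, $l_i^t=\max(0,1+\mathbf{w}^t\cdot\mathbf{x}^t-\theta_i^t)$ for $y_r^t\le i\le K-1$, $l_i^t=0$ otherwise. Losses of the fixed predictor: $l_i^{t*}=\max(0,1-\mathbf{u}\cdot\mathbf{x}^t+b_i)$ for $1\le i\le y_l^t-1$, $l_i^{t*}=\max(0,1+\mathbf{u}\cdot\mathbf{x}^t-b_i)$ for $y_r^t\le i\le K-1$, $0$ otherwise. *)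

theory Defs
  imports "HOL-Analysis.Analysis"
begin

text \<open>Thresholds are represented as functions nat => real, meaningful on {1..K-1};
  the PA-II iterate is required to vanish outside {1..K-1}.\<close>

definition thr_sqnorm :: "nat \<Rightarrow> (nat \<Rightarrow> real) \<Rightarrow> real" where
  "thr_sqnorm K b = (\<Sum>i=1..K-1. (b i)^2)"

definition active_set :: "nat \<Rightarrow> nat \<Rightarrow> nat \<Rightarrow> nat set" where
  "active_set K yl yr = {1..yl-1} \<union> {yr..K-1}"

definition pa2_objective ::
  "real \<Rightarrow> nat \<Rightarrow> nat \<Rightarrow> nat \<Rightarrow> real^'d \<Rightarrow> (nat \<Rightarrow> real)
   \<Rightarrow> real^'d \<Rightarrow> (nat \<Rightarrow> real) \<Rightarrow> (nat \<Rightarrow> real) \<Rightarrow> real" where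
  "pa2_objective C K yl yr w0 th0 w th xi =
     (1/2) * (norm (w - w0))^2 + (1/2) * (\<Sum>i=1..K-1. (th i - th0 i)^2)
     + C * (\<Sum>i\<in>active_set K yl yr. (xi i)^2)"

definition pa2_feasible ::
  "nat \<Rightarrow> real^'d \<Rightarrow> nat \<Rightarrow> nat \<Rightarrow> real^'d \<Rightarrow> (nat \<Rightarrow> real) \<Rightarrow> (nat \<Rightarrow> real) \<Rightarrow> bool" where
  "pa2_feasible K x yl yr w th xi \<longleftrightarrow>
     (\<forall>i. i \<notin> {1..K-1} \<longrightarrow> th i = 0) \<and>
     (\<forall>i\<in>{1..yl-1}. w \<bullet> x - th i \<ge> 1 - xi i) \<and>
     (\<forall>i\<in>{yr..K-1}. w \<bullet> x - th i \<le> -1 + xi i)"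

definition pa2_is_update ::
  "real \<Rightarrow> nat \<Rightarrow> real^'d \<Rightarrow> nat \<Rightarrow> nat \<Rightarrow> real^'d \<Rightarrow> (nat \<Rightarrow> real)
   \<Rightarrow> real^'d \<Rightarrow> (nat \<Rightarrow> real) \<Rightarrow> bool" where
  "pa2_is_update C K x yl yr w0 th0 w th \<longleftrightarrow>
     (\<exists>xi. pa2_feasible K x yl yr w th xi \<and>
        (\<forall>w' th' xi'. pa2_feasible K x yl yr w' th' xi' \<longrightarrow>
           pa2_objective C K yl yr w0 th0 w th xi \<le> pa2_objective C K yl yr w0 th0 w' th' xi'))"

definition pa2_step ::
  "real \<Rightarrow> nat \<Rightarrow> real^'d \<Rightarrow> nat \<Rightarrow> nat \<Rightarrow> (real^'d) \<times> (nat \<Rightarrow> real) \<Rightarrow> (real^'d) \<times> (nat \<Rightarrow> real)" where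
  "pa2_step C K x yl yr s = (THE p. pa2_is_update C K x yl yr (fst s) (snd s) (fst p) (snd p))"

text \<open>pa2_run C K xs yl yr n = (w^{n+1}, theta^{n+1}); examples are indexed from 1.\<close>
primrec pa2_run ::
  "real \<Rightarrow> nat \<Rightarrow> (nat \<Rightarrow> real^'d) \<Rightarrow> (nat \<Rightarrow> nat) \<Rightarrow> (nat \<Rightarrow> nat) \<Rightarrow> nat
   \<Rightarrow> (real^'d) \<times> (nat \<Rightarrow> real)" where
  "pa2_run C K xs yl yr 0 = (0, \<lambda>_. 0)"
| "pa2_run C K xs yl yr (Suc n) =
     pa2_step C K (xs (Suc n)) (yl (Suc n)) (yr (Suc n)) (pa2_run C K xs yl yr n)"

definition ord_loss ::
  "nat \<Rightarrow> real^'d \<Rightarrow> nat \<Rightarrow> nat \<Rightarrow> real^'d \<Rightarrow> (nat \<Rightarrow> real) \<Rightarrow> nat \<Rightarrow> real" where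
  "ord_loss K x yl yr w th i =
     (if 1 \<le> i \<and> i \<le> yl - 1 then max 0 (1 + th i - w \<bullet> x)
      else if yr \<le> i \<and> i \<le> K - 1 then max 0 (1 + w \<bullet> x - th i)
      else 0)"

end

theory Submission
  imports Defs
begin

text \<open>
  A PA-II update minimises a strongly convex quadratic over a convex set. Hence it is unique and
  satisfies a Pythagorean inequality: the optimal value plus half the squared distance to any other
  feasible point is at most that point's objective. Taking as the other point the comparison
  predictor v = (u, b) with its own losses as slacks, twice the optimal value at trial t is at most
  |v - v_t|^2 - |v - v_(t+1)|^2 plus 2C times the squared losses of v. Conversely, each loss of
  v_t is at most the change of the score plus the threshold move plus the slack of any feasible
  point, so by Cauchy-Schwarz the squared losses of v_t are at most D times twice the optimal
  value. Summing over t, the distances telescope. Existence of the minimiser follows by reducing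
  the problem to a coercive function of the single real variable (w - w_t) \<bullet> x_t.
\<close>

lemma sq_add_le_mult_add:
  fixes a b \<alpha> \<beta> A B :: real
  assumes "a\<^sup>2 \<le> \<alpha> * A" "b\<^sup>2 \<le> \<beta> * B" "0 \<le> \<alpha>" "0 \<le> \<beta>" "0 \<le> A" "0 \<le> B"
  shows "(a + b)\<^sup>2 \<le> (\<alpha> + \<beta>) * (A + B)"
proof -
  have "(a * b)\<^sup>2 \<le> (\<alpha> * B) * (\<beta> * A)"
    using mult_mono[OF assms(1,2)] assms by (simp add: power_mult_distrib mult_ac)
  also have "\<dots> \<le> ((\<alpha> * B + \<beta> * A) / 2)\<^sup>2"
    using sum_squares_ge_zero[of "\<alpha> * B - \<beta> * A" 0] by (simp add: power2_eq_square algebra_simps)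
  finally have "a * b \<le> (\<alpha> * B + \<beta> * A) / 2"
    by (rule power2_le_imp_le) (use assms in simp)
  then show ?thesis
    using assms(1,2) by (simp add: power2_eq_square algebra_simps)
qed

lemma add_le_of_shrinking_add_le:
  fixes a b c :: real
  assumes "\<And>s. 0 < s \<Longrightarrow> s < 1 \<Longrightarrow> a + (1 - s) * c \<le> b"
  shows "a + c \<le> b"
proof -
  have "((\<lambda>s. a + (1 - s) * c) \<longlongrightarrow> a + (1 - 0) * c) (at_right 0)"
    by (intro tendsto_intros)
  moreover have "\<forall>\<^sub>F s in at_right 0. a + (1 - s) * c \<le> b"
    by (rule eventually_mono[OF eventually_at_right_real[of 0 1]]) (use assms in auto)
  ultimately show ?thesis
    by (auto intro: tendsto_upperbound)
qed

lemma continuous_coercive_attains_min: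
  fixes f :: "real \<Rightarrow> real"
  assumes cont: "continuous_on UNIV f" and "0 < a" and coercive: "\<And>t. a * t\<^sup>2 \<le> f t"
  shows "\<exists>t0. \<forall>t. f t0 \<le> f t"
proof -
  define M where "M = f 0 / a + 1"
  have "0 \<le> f 0 / a"
    using coercive[of 0] \<open>0 < a\<close> by simp
  then have "1 \<le> M" by (simp add: M_def)
  then have "{-M..M} \<noteq> {}" by simp
  then obtain t0 where "t0 \<in> {-M..M}" and min: "\<forall>t\<in>{-M..M}. f t0 \<le> f t"
    using continuous_attains_inf[OF compact_Icc _ continuous_on_subset[OF cont subset_UNIV]] by blast
  have "f t0 \<le> f t" for t
  proof (cases "t \<in> {-M..M}")
    case False
    then have "M < \<bar>t\<bar>" by auto
    with \<open>1 \<le> M\<close> have "\<bar>t\<bar> \<le> \<bar>t\<bar> * \<bar>t\<bar>"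
      by (intro mult_le_cancel_left1[THEN iffD2]) auto
    then have "f 0 / a < t\<^sup>2"
      using \<open>M < \<bar>t\<bar>\<close> by (simp add: M_def power2_eq_square)
    then have "f 0 < a * t\<^sup>2"
      using \<open>0 < a\<close> by (simp add: divide_less_eq mult.commute)
    moreover have "f t0 \<le> f 0"
      using min \<open>1 \<le> M\<close> by simp
    ultimately show ?thesis
      using coercive[of t] by linarith
  qed (use min in blast)
  then show ?thesis by blast
qed

text \<open>Covering a margin deficit G by a threshold move e and a slack z costs at least
  C / (2C + 1) * max 0 G squared; the optimum splits g = max 0 G as e = 2C g / (2C + 1), z = g / (2C + 1).\<close>

lemma split_cost_ge:
  fixes C G e z :: real
  assumes "0 < C" "G \<le> e + z"
  shows "C / (2 * C + 1) * (max 0 G)\<^sup>2 \<le> e\<^sup>2 / 2 + C * z\<^sup>2"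
proof -
  have "(max 0 G)\<^sup>2 \<le> (e + z)\<^sup>2"
    using assms(2) by (cases "G \<le> 0") (auto intro: power_mono)
  also have "\<dots> \<le> (1 + 1 / (2 * C)) * (e\<^sup>2 + 2 * C * z\<^sup>2)"
    using assms(1) by (intro sq_add_le_mult_add) (auto simp: power2_eq_square)
  finally have "C / (2 * C + 1) * (max 0 G)\<^sup>2 \<le> C / (2 * C + 1) * ((1 + 1 / (2 * C)) * (e\<^sup>2 + 2 * C * z\<^sup>2))"
    using assms(1) by (intro mult_left_mono) auto
  also have "\<dots> = (C / (2 * C + 1) * (1 + 1 / (2 * C))) * (e\<^sup>2 + 2 * C * z\<^sup>2)"
    by (simp only: mult.assoc)
  also have "C / (2 * C + 1) * (1 + 1 / (2 * C)) = 1 / 2"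
  proof -
    have "1 + 1 / (2 * C) = (2 * C + 1) / (2 * C)"
      using assms(1) by (simp add: field_simps)
    then show ?thesis using assms(1) by simp
  qed
  also have "1 / 2 * (e\<^sup>2 + 2 * C * z\<^sup>2) = e\<^sup>2 / 2 + C * z\<^sup>2"
    by simp
  finally show ?thesis .
qed

lemma split_cost_at_optimum:
  fixes C g :: real
  assumes "0 < C"
  shows "(2 * C / (2 * C + 1) * g)\<^sup>2 / 2 + C * (g / (2 * C + 1))\<^sup>2 = C / (2 * C + 1) * g\<^sup>2"
proof -
  define t where "t = 2 * C + 1"
  have "0 < t" using assms by (simp add: t_def)
  then have "(2 * C / t * g)\<^sup>2 / 2 + C * (g / t)\<^sup>2 = (2 * C\<^sup>2 + C) / t\<^sup>2 * g\<^sup>2"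
    by (simp add: field_simps power2_eq_square)
  also have "2 * C\<^sup>2 + C = C * t"
    by (simp add: t_def power2_eq_square algebra_simps)
  also have "C * t / t\<^sup>2 * g\<^sup>2 = C / t * g\<^sup>2"
    using \<open>0 < t\<close> by (simp add: power2_eq_square)
  finally show ?thesis unfolding t_def .
qed

lemma norm_convex_combination_sq:
  fixes a b :: "'a::real_inner"
  shows "(norm ((1 - s) *\<^sub>R a + s *\<^sub>R b))\<^sup>2
    = (1 - s) * (norm a)\<^sup>2 + s * (norm b)\<^sup>2 - s * (1 - s) * (norm (b - a))\<^sup>2"
  unfolding power2_norm_eq_inner
  by (simp add: inner_add_left inner_add_right inner_diff_left inner_diff_right inner_commute algebra_simps)

lemma sum_convex_combination_sq:
  fixes f g :: "'i \<Rightarrow> real"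
  shows "(\<Sum>i\<in>I. ((1 - s) * f i + s * g i)\<^sup>2)
    = (1 - s) * (\<Sum>i\<in>I. (f i)\<^sup>2) + s * (\<Sum>i\<in>I. (g i)\<^sup>2) - s * (1 - s) * (\<Sum>i\<in>I. (g i - f i)\<^sup>2)"
proof -
  have "(\<Sum>i\<in>I. ((1 - s) * f i + s * g i)\<^sup>2)
      = (\<Sum>i\<in>I. (1 - s) * (f i)\<^sup>2 + s * (g i)\<^sup>2 - s * (1 - s) * (g i - f i)\<^sup>2)"
    using norm_convex_combination_sq[of s "f _" "g _"] by simp
  also have "\<dots> = (\<Sum>i\<in>I. (1 - s) * (f i)\<^sup>2) + (\<Sum>i\<in>I. s * (g i)\<^sup>2) - (\<Sum>i\<in>I. s * (1 - s) * (g i - f i)\<^sup>2)"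
    by (simp only: sum.distrib sum_subtractf)
  finally show ?thesis
    by (simp only: sum_distrib_left)
qed

lemma sum_le_telescoping:
  fixes a e V :: "nat \<Rightarrow> real"
  assumes step: "\<And>t. t \<in> {1..T} \<Longrightarrow> a t \<le> D * (V (t - 1) - V t + e t)"
    and "0 \<le> D" "0 \<le> V T"
  shows "(\<Sum>t=1..T. a t) \<le> D * (V 0 + (\<Sum>t=1..T. e t))"
proof -
  have "(\<Sum>t=1..T. a t) \<le> (\<Sum>t=1..T. D * (V (t - 1) - V t + e t))"
    by (rule sum_mono) (rule step)
  also have "\<dots> = D * ((\<Sum>t=1..T. V (t - 1) - V t) + (\<Sum>t=1..T. e t))"
    by (simp only: distrib_left sum.distrib sum_distrib_left)
  also have "(\<Sum>t=1..T. V (t - 1) - V t) = V 0 - V T"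
    using sum_telescope''[of 0 T "\<lambda>t. - V t"] by simp
  also have "D * (V 0 - V T + (\<Sum>t=1..T. e t)) \<le> D * (V 0 + (\<Sum>t=1..T. e t))"
    using assms(2,3) by (intro mult_left_mono) auto
  finally show ?thesis .
qed

section \<open>The PA-II problem as a projection\<close>

definition pa2_sqdist ::
  "real \<Rightarrow> nat \<Rightarrow> nat \<Rightarrow> nat \<Rightarrow> real^'d \<Rightarrow> (nat \<Rightarrow> real) \<Rightarrow> (nat \<Rightarrow> real)
   \<Rightarrow> real^'d \<Rightarrow> (nat \<Rightarrow> real) \<Rightarrow> (nat \<Rightarrow> real) \<Rightarrow> real" where
  "pa2_sqdist C K yl yr w th xi w' th' xi' =
     (norm (w' - w))\<^sup>2 + (\<Sum>i=1..K-1. (th' i - th i)\<^sup>2)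
     + 2 * C * (\<Sum>i\<in>active_set K yl yr. (xi' i - xi i)\<^sup>2)"

lemma pa2_objective_convex_combination:
  "pa2_objective C K yl yr w0 th0
      ((1 - s) *\<^sub>R w1 + s *\<^sub>R w2) (\<lambda>i. (1 - s) * th1 i + s * th2 i) (\<lambda>i. (1 - s) * xi1 i + s * xi2 i)
   = (1 - s) * pa2_objective C K yl yr w0 th0 w1 th1 xi1 + s * pa2_objective C K yl yr w0 th0 w2 th2 xi2
     - s * (1 - s) / 2 * pa2_sqdist C K yl yr w1 th1 xi1 w2 th2 xi2"
proof -
  have "(1 - s) *\<^sub>R w1 + s *\<^sub>R w2 - w0 = (1 - s) *\<^sub>R (w1 - w0) + s *\<^sub>R (w2 - w0)"
    by (simp add: algebra_simps)
  then have w: "(norm ((1 - s) *\<^sub>R w1 + s *\<^sub>R w2 - w0))\<^sup>2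
      = (1 - s) * (norm (w1 - w0))\<^sup>2 + s * (norm (w2 - w0))\<^sup>2 - s * (1 - s) * (norm (w2 - w1))\<^sup>2"
    using norm_convex_combination_sq[of s "w1 - w0" "w2 - w0"] by simp
  have "(1 - s) * th1 i + s * th2 i - th0 i = (1 - s) * (th1 i - th0 i) + s * (th2 i - th0 i)" for i
    by (simp add: algebra_simps)
  then have th: "(\<Sum>i=1..K-1. ((1 - s) * th1 i + s * th2 i - th0 i)\<^sup>2)
      = (1 - s) * (\<Sum>i=1..K-1. (th1 i - th0 i)\<^sup>2) + s * (\<Sum>i=1..K-1. (th2 i - th0 i)\<^sup>2)
        - s * (1 - s) * (\<Sum>i=1..K-1. (th2 i - th1 i)\<^sup>2)"
    using sum_convex_combination_sq[of s "\<lambda>i. th1 i - th0 i" "\<lambda>i. th2 i - th0 i" "{1..K-1}"] by simp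
  show ?thesis
    unfolding pa2_objective_def pa2_sqdist_def w th sum_convex_combination_sq
    by (simp add: field_simps)
qed

lemma pa2_feasible_convex_combination:
  assumes feas1: "pa2_feasible K x yl yr w1 th1 xi1" and feas2: "pa2_feasible K x yl yr w2 th2 xi2"
    and "0 \<le> s" "s \<le> 1"
  shows "pa2_feasible K x yl yr
    ((1 - s) *\<^sub>R w1 + s *\<^sub>R w2) (\<lambda>i. (1 - s) * th1 i + s * th2 i) (\<lambda>i. (1 - s) * xi1 i + s * xi2 i)"
proof -
  have score: "((1 - s) *\<^sub>R w1 + s *\<^sub>R w2) \<bullet> x - ((1 - s) * th1 i + s * th2 i)
      = (1 - s) * (w1 \<bullet> x - th1 i) + s * (w2 \<bullet> x - th2 i)" for i
    by (simp add: inner_add_left algebra_simps)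
  have mix: "(1 - s) * a1 + s * a2 \<le> (1 - s) * b1 + s * b2" if "a1 \<le> b1" "a2 \<le> b2" for a1 a2 b1 b2 :: real
    using that \<open>0 \<le> s\<close> \<open>s \<le> 1\<close> by (intro add_mono mult_left_mono) auto
  have lower: "1 - ((1 - s) * xi1 i + s * xi2 i) \<le> (1 - s) * (w1 \<bullet> x - th1 i) + s * (w2 \<bullet> x - th2 i)"
    if "i \<in> {1..yl-1}" for i
  proof -
    have "1 - ((1 - s) * xi1 i + s * xi2 i) = (1 - s) * (1 - xi1 i) + s * (1 - xi2 i)"
      by (simp add: algebra_simps)
    also have "\<dots> \<le> (1 - s) * (w1 \<bullet> x - th1 i) + s * (w2 \<bullet> x - th2 i)"
      using feas1 feas2 that unfolding pa2_feasible_def by (intro mix) auto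
    finally show ?thesis .
  qed
  have upper: "(1 - s) * (w1 \<bullet> x - th1 i) + s * (w2 \<bullet> x - th2 i) \<le> -1 + ((1 - s) * xi1 i + s * xi2 i)"
    if "i \<in> {yr..K-1}" for i
  proof -
    have "(1 - s) * (w1 \<bullet> x - th1 i) + s * (w2 \<bullet> x - th2 i) \<le> (1 - s) * (-1 + xi1 i) + s * (-1 + xi2 i)"
      using feas1 feas2 that unfolding pa2_feasible_def by (intro mix) auto
    also have "\<dots> = -1 + ((1 - s) * xi1 i + s * xi2 i)"
      by (simp add: algebra_simps)
    finally show ?thesis .
  qed
  show ?thesis
    using feas1 feas2 lower upper unfolding pa2_feasible_def score by auto
qed

lemma pa2_minimizer_gap:
  assumes feas1: "pa2_feasible K x yl yr w1 th1 xi1"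
    and min1: "\<forall>w th xi. pa2_feasible K x yl yr w th xi \<longrightarrow>
      pa2_objective C K yl yr w0 th0 w1 th1 xi1 \<le> pa2_objective C K yl yr w0 th0 w th xi"
    and feas2: "pa2_feasible K x yl yr w2 th2 xi2"
  shows "pa2_objective C K yl yr w0 th0 w1 th1 xi1 + pa2_sqdist C K yl yr w1 th1 xi1 w2 th2 xi2 / 2
    \<le> pa2_objective C K yl yr w0 th0 w2 th2 xi2"
proof -
  let ?f1 = "pa2_objective C K yl yr w0 th0 w1 th1 xi1"
  let ?f2 = "pa2_objective C K yl yr w0 th0 w2 th2 xi2"
  let ?d = "pa2_sqdist C K yl yr w1 th1 xi1 w2 th2 xi2"
  have "?f1 + (1 - s) * (?d / 2) \<le> ?f2" if "0 < s" "s < 1" for s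
  proof -
    have "?f1 \<le> pa2_objective C K yl yr w0 th0
        ((1 - s) *\<^sub>R w1 + s *\<^sub>R w2) (\<lambda>i. (1 - s) * th1 i + s * th2 i) (\<lambda>i. (1 - s) * xi1 i + s * xi2 i)"
      using min1 pa2_feasible_convex_combination[OF feas1 feas2, of s] that by simp
    also have "\<dots> = (1 - s) * ?f1 + s * ?f2 - s * (1 - s) / 2 * ?d"
      by (rule pa2_objective_convex_combination)
    finally have "s * (?f1 + (1 - s) * (?d / 2)) \<le> s * ?f2"
      by (simp add: algebra_simps)
    then show ?thesis
      using \<open>0 < s\<close> by simp
  qed
  then show ?thesis
    by (rule add_le_of_shrinking_add_le)
qed

lemma pa2_is_update_unique:
  assumes "0 < C"
    and upd1: "pa2_is_update C K x yl yr w0 th0 w1 th1" and upd2: "pa2_is_update C K x yl yr w0 th0 w2 th2"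
  shows "w1 = w2 \<and> th1 = th2"
proof -
  obtain xi1 where feas1: "pa2_feasible K x yl yr w1 th1 xi1"
    and min1: "\<forall>w th xi. pa2_feasible K x yl yr w th xi \<longrightarrow>
      pa2_objective C K yl yr w0 th0 w1 th1 xi1 \<le> pa2_objective C K yl yr w0 th0 w th xi"
    using upd1 unfolding pa2_is_update_def by blast
  obtain xi2 where feas2: "pa2_feasible K x yl yr w2 th2 xi2"
    and min2: "\<forall>w th xi. pa2_feasible K x yl yr w th xi \<longrightarrow>
      pa2_objective C K yl yr w0 th0 w2 th2 xi2 \<le> pa2_objective C K yl yr w0 th0 w th xi"
    using upd2 unfolding pa2_is_update_def by blast
  have "pa2_sqdist C K yl yr w1 th1 xi1 w2 th2 xi2 \<le> 0"
    using pa2_minimizer_gap[OF feas1 min1 feas2] min2 feas1 by fastforce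
  moreover have "0 \<le> (norm (w2 - w1))\<^sup>2" "0 \<le> (\<Sum>i=1..K-1. (th2 i - th1 i)\<^sup>2)"
    "0 \<le> 2 * C * (\<Sum>i\<in>active_set K yl yr. (xi2 i - xi1 i)\<^sup>2)"
    using \<open>0 < C\<close> by (simp_all add: sum_nonneg)
  ultimately have "(norm (w2 - w1))\<^sup>2 = 0" and th_sum: "(\<Sum>i=1..K-1. (th2 i - th1 i)\<^sup>2) = 0"
    unfolding pa2_sqdist_def by linarith+
  then have "w1 = w2" by simp
  moreover have "th1 i = th2 i" for i
  proof (cases "i \<in> {1..K-1}")
    case True
    then show ?thesis using th_sum by (subst (asm) sum_nonneg_eq_0_iff) auto
  next
    case False
    then show ?thesis using feas1 feas2 unfolding pa2_feasible_def by auto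
  qed
  ultimately show ?thesis by blast
qed

section \<open>Existence of the PA-II update\<close>

lemma active_set_subset:
  "1 \<le> yr \<Longrightarrow> yl \<le> K \<Longrightarrow> active_set K yl yr \<subseteq> {1..K-1}"
  unfolding active_set_def by auto

definition ord_sign :: "nat \<Rightarrow> nat \<Rightarrow> real" where
  "ord_sign yl i = (if i < yl then 1 else -1)"

lemma ord_sign_sq [simp]: "ord_sign yl i * ord_sign yl i = 1"
  by (simp add: ord_sign_def)

lemma pa2_feasible_iff_signed:
  assumes "yl \<le> yr"
  shows "pa2_feasible K x yl yr w th xi \<longleftrightarrow>
    (\<forall>i. i \<notin> {1..K-1} \<longrightarrow> th i = 0) \<and>
    (\<forall>i\<in>active_set K yl yr. 1 - xi i \<le> ord_sign yl i * (w \<bullet> x - th i))"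
proof -
  have "ord_sign yl i = 1" if "i \<in> {1..yl-1}" for i
    using that by (auto simp: ord_sign_def)
  then have lower: "(\<forall>i\<in>{1..yl-1}. 1 - xi i \<le> ord_sign yl i * (w \<bullet> x - th i))
      \<longleftrightarrow> (\<forall>i\<in>{1..yl-1}. w \<bullet> x - th i \<ge> 1 - xi i)"
    by simp
  have "ord_sign yl i = -1" if "i \<in> {yr..K-1}" for i
    using that assms by (auto simp: ord_sign_def)
  then have upper: "(\<forall>i\<in>{yr..K-1}. 1 - xi i \<le> ord_sign yl i * (w \<bullet> x - th i))
      \<longleftrightarrow> (\<forall>i\<in>{yr..K-1}. w \<bullet> x - th i \<le> -1 + xi i)"
    by force
  show ?thesis
    unfolding pa2_feasible_def active_set_def ball_Un lower upper ..
qed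

text \<open>The optimal PA-II objective among the points with (w - w0) \<bullet> x = \<delta>. For x = 0 the
  first summand is the junk value \<delta>^2 / 0 = 0, but then only \<delta> = 0 is attainable.\<close>

definition pa2_reduced_objective ::
  "real \<Rightarrow> nat \<Rightarrow> nat \<Rightarrow> nat \<Rightarrow> real^'d \<Rightarrow> real^'d \<Rightarrow> (nat \<Rightarrow> real) \<Rightarrow> real \<Rightarrow> real" where
  "pa2_reduced_objective C K yl yr x w0 th0 \<delta> =
     \<delta>\<^sup>2 / (2 * (norm x)\<^sup>2)
     + C / (2 * C + 1) * (\<Sum>i\<in>active_set K yl yr. (max 0 (1 - ord_sign yl i * (w0 \<bullet> x + \<delta> - th0 i)))\<^sup>2)"

lemma pa2_reduced_objective_le:
  assumes "0 < C" "1 \<le> yl" "yl \<le> yr" "yr \<le> K" and feas: "pa2_feasible K x yl yr w th xi"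
  shows "pa2_reduced_objective C K yl yr x w0 th0 ((w - w0) \<bullet> x) \<le> pa2_objective C K yl yr w0 th0 w th xi"
proof -
  define \<delta> where "\<delta> = (w - w0) \<bullet> x"
  let ?A = "active_set K yl yr"
  have "\<delta>\<^sup>2 \<le> (norm (w - w0) * norm x)\<^sup>2"
    unfolding \<delta>_def using Cauchy_Schwarz_ineq2 by (metis abs_ge_zero power2_abs power_mono)
  then have w_part: "\<delta>\<^sup>2 / (2 * (norm x)\<^sup>2) \<le> (norm (w - w0))\<^sup>2 / 2"
    by (cases "x = 0") (simp_all add: divide_le_eq power_mult_distrib)
  have th_part: "C / (2 * C + 1) * (max 0 (1 - ord_sign yl i * (w0 \<bullet> x + \<delta> - th0 i)))\<^sup>2
      \<le> (th i - th0 i)\<^sup>2 / 2 + C * (xi i)\<^sup>2" if "i \<in> ?A" for i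
  proof -
    have "1 - xi i \<le> ord_sign yl i * (w \<bullet> x - th i)"
      using feas that unfolding pa2_feasible_iff_signed[OF \<open>yl \<le> yr\<close>] by blast
    moreover have "w \<bullet> x = w0 \<bullet> x + \<delta>"
      by (simp add: \<delta>_def inner_diff_left)
    ultimately have "1 - ord_sign yl i * (w0 \<bullet> x + \<delta> - th0 i) \<le> - ord_sign yl i * (th i - th0 i) + xi i"
      by (simp add: algebra_simps)
    then have "C / (2 * C + 1) * (max 0 (1 - ord_sign yl i * (w0 \<bullet> x + \<delta> - th0 i)))\<^sup>2
        \<le> (- ord_sign yl i * (th i - th0 i))\<^sup>2 / 2 + C * (xi i)\<^sup>2"
      by (rule split_cost_ge[OF \<open>0 < C\<close>])
    also have "(- ord_sign yl i * (th i - th0 i))\<^sup>2 = (th i - th0 i)\<^sup>2"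
      by (simp add: power2_eq_square algebra_simps)
    finally show ?thesis .
  qed
  have "C / (2 * C + 1) * (\<Sum>i\<in>?A. (max 0 (1 - ord_sign yl i * (w0 \<bullet> x + \<delta> - th0 i)))\<^sup>2)
      = (\<Sum>i\<in>?A. C / (2 * C + 1) * (max 0 (1 - ord_sign yl i * (w0 \<bullet> x + \<delta> - th0 i)))\<^sup>2)"
    by (simp add: sum_distrib_left)
  also have "\<dots> \<le> (\<Sum>i\<in>?A. (th i - th0 i)\<^sup>2 / 2 + C * (xi i)\<^sup>2)"
    by (rule sum_mono) (rule th_part)
  also have "\<dots> = (\<Sum>i\<in>?A. (th i - th0 i)\<^sup>2) / 2 + C * (\<Sum>i\<in>?A. (xi i)\<^sup>2)"
    by (simp add: sum.distrib sum_divide_distrib sum_distrib_left)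
  finally have th_sum: "C / (2 * C + 1) * (\<Sum>i\<in>?A. (max 0 (1 - ord_sign yl i * (w0 \<bullet> x + \<delta> - th0 i)))\<^sup>2)
      \<le> (\<Sum>i\<in>?A. (th i - th0 i)\<^sup>2) / 2 + C * (\<Sum>i\<in>?A. (xi i)\<^sup>2)" .
  have "(\<Sum>i\<in>?A. (th i - th0 i)\<^sup>2) \<le> (\<Sum>i=1..K-1. (th i - th0 i)\<^sup>2)"
    using active_set_subset[of yr yl K] assms(2-4) by (intro sum_mono2) auto
  with w_part th_sum show ?thesis
    unfolding pa2_reduced_objective_def pa2_objective_def \<delta>_def[symmetric] by linarith
qed

lemma pa2_reduced_objective_attained:
  assumes "0 < C" "1 \<le> yl" "yl \<le> yr" "yr \<le> K" "x \<noteq> 0 \<or> \<delta> = 0"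
  shows "\<exists>w th xi. pa2_feasible K x yl yr w th xi
    \<and> pa2_objective C K yl yr w0 th0 w th xi = pa2_reduced_objective C K yl yr x w0 th0 \<delta>"
proof -
  let ?A = "active_set K yl yr"
  define g where "g i = max 0 (1 - ord_sign yl i * (w0 \<bullet> x + \<delta> - th0 i))" for i
  define w where "w = w0 + (\<delta> / (norm x)\<^sup>2) *\<^sub>R x"
  define th where "th i = (if i \<in> ?A then th0 i - ord_sign yl i * (2 * C / (2 * C + 1) * g i)
    else if i \<in> {1..K-1} then th0 i else 0)" for i
  define xi where "xi i = g i / (2 * C + 1)" for i
  have A_sub: "?A \<subseteq> {1..K-1}"
    using assms(2-4) by (intro active_set_subset) auto
  have wx: "w \<bullet> x = w0 \<bullet> x + \<delta>"
    using assms(5) by (auto simp: w_def inner_add_left power2_norm_eq_inner)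
  have "1 - xi i \<le> ord_sign yl i * (w \<bullet> x - th i)" if "i \<in> ?A" for i
  proof -
    have "1 - xi i = 1 - g i + 2 * C / (2 * C + 1) * g i"
      using \<open>0 < C\<close> by (simp add: xi_def field_simps)
    also have "\<dots> \<le> ord_sign yl i * (w0 \<bullet> x + \<delta> - th0 i) + 2 * C / (2 * C + 1) * g i"
      unfolding g_def by simp
    also have "\<dots> = ord_sign yl i * (w \<bullet> x - th i)"
      using that by (simp add: wx th_def algebra_simps)
    finally show ?thesis .
  qed
  then have feas: "pa2_feasible K x yl yr w th xi"
    using A_sub unfolding pa2_feasible_iff_signed[OF \<open>yl \<le> yr\<close>] by (auto simp: th_def)
  have "(norm (w - w0))\<^sup>2 = \<delta>\<^sup>2 / (norm x)\<^sup>2"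
    using assms(5) by (auto simp: w_def power_mult_distrib power_divide power2_eq_square)
  moreover have "(\<Sum>i=1..K-1. (th i - th0 i)\<^sup>2) = (\<Sum>i\<in>?A. (2 * C / (2 * C + 1) * g i)\<^sup>2)"
  proof -
    have "(\<Sum>i=1..K-1. (th i - th0 i)\<^sup>2) = (\<Sum>i\<in>?A. (th i - th0 i)\<^sup>2)"
      using A_sub by (intro sum.mono_neutral_right) (auto simp: th_def)
    also have "\<dots> = (\<Sum>i\<in>?A. (2 * C / (2 * C + 1) * g i)\<^sup>2)"
      by (intro sum.cong) (auto simp: th_def power2_eq_square)
    finally show ?thesis .
  qed
  moreover have "(2 * C / (2 * C + 1) * g i)\<^sup>2 / 2 + C * (xi i)\<^sup>2 = C / (2 * C + 1) * (g i)\<^sup>2" for i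
    unfolding xi_def by (rule split_cost_at_optimum[OF \<open>0 < C\<close>])
  then have "(\<Sum>i\<in>?A. (2 * C / (2 * C + 1) * g i)\<^sup>2) / 2 + C * (\<Sum>i\<in>?A. (xi i)\<^sup>2)
      = C / (2 * C + 1) * (\<Sum>i\<in>?A. (g i)\<^sup>2)"
    by (simp add: sum_divide_distrib sum_distrib_left flip: sum.distrib)
  ultimately have "pa2_objective C K yl yr w0 th0 w th xi = pa2_reduced_objective C K yl yr x w0 th0 \<delta>"
    unfolding pa2_objective_def pa2_reduced_objective_def g_def by simp
  with feas show ?thesis by blast
qed

lemma pa2_is_update_exists:
  assumes "0 < C" "1 \<le> yl" "yl \<le> yr" "yr \<le> K"
  shows "\<exists>w th. pa2_is_update C K x yl yr w0 th0 w th"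
proof -
  let ?\<psi> = "pa2_reduced_objective C K yl yr x w0 th0"
  obtain \<delta> where \<delta>: "x \<noteq> 0 \<or> \<delta> = 0" and min: "\<And>w. ?\<psi> \<delta> \<le> ?\<psi> ((w - w0) \<bullet> x)"
  proof (cases "x = 0")
    case True
    then show ?thesis using that[of 0] by simp
  next
    case False
    have "continuous_on UNIV ?\<psi>"
      unfolding pa2_reduced_objective_def using False by (intro continuous_intros) auto
    moreover have "0 < 1 / (2 * (norm x)\<^sup>2)"
      using False by simp
    moreover have "1 / (2 * (norm x)\<^sup>2) * t\<^sup>2 \<le> ?\<psi> t" for t
      using \<open>0 < C\<close> unfolding pa2_reduced_objective_def
      by (auto intro!: divide_nonneg_nonneg mult_nonneg_nonneg sum_nonneg)
    ultimately obtain \<delta> where "\<forall>t. ?\<psi> \<delta> \<le> ?\<psi> t"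
      using continuous_coercive_attains_min by blast
    then show ?thesis using that False by blast
  qed
  obtain w th xi where feas: "pa2_feasible K x yl yr w th xi"
    and obj: "pa2_objective C K yl yr w0 th0 w th xi = ?\<psi> \<delta>"
    using pa2_reduced_objective_attained[OF assms \<delta>] by blast
  have "pa2_objective C K yl yr w0 th0 w th xi \<le> pa2_objective C K yl yr w0 th0 w' th' xi'"
    if "pa2_feasible K x yl yr w' th' xi'" for w' th' xi'
    using obj min[of w'] pa2_reduced_objective_le[OF assms that, of w0 th0] by linarith
  with feas show ?thesis
    unfolding pa2_is_update_def by blast
qed

lemma pa2_step_is_update:
  assumes "0 < C" "1 \<le> yl" "yl \<le> yr" "yr \<le> K"
  shows "pa2_is_update C K x yl yr (fst s) (snd s) (fst (pa2_step C K x yl yr s)) (snd (pa2_step C K x yl yr s))"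
proof -
  let ?upd = "\<lambda>p. pa2_is_update C K x yl yr (fst s) (snd s) (fst p) (snd p)"
  have "\<exists>w th. pa2_is_update C K x yl yr (fst s) (snd s) w th"
    by (rule pa2_is_update_exists[OF assms])
  then obtain w th where upd: "?upd (w, th)"
    by auto
  have "?upd (THE p. ?upd p)"
  proof (rule theI[of ?upd "(w, th)"])
    fix p
    assume "?upd p"
    from pa2_is_update_unique[OF \<open>0 < C\<close> this upd] show "p = (w, th)"
      by (simp add: prod_eq_iff)
  qed (fact upd)
  then show ?thesis
    unfolding pa2_step_def .
qed

lemma pa2_run_is_update:
  assumes "0 < C" "1 \<le> t" "1 \<le> yl t" "yl t \<le> yr t" "yr t \<le> K"
  shows "pa2_is_update C K (xs t) (yl t) (yr t)
    (fst (pa2_run C K xs yl yr (t - 1))) (snd (pa2_run C K xs yl yr (t - 1)))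
    (fst (pa2_run C K xs yl yr t)) (snd (pa2_run C K xs yl yr t))"
proof -
  have "pa2_run C K xs yl yr t = pa2_step C K (xs t) (yl t) (yr t) (pa2_run C K xs yl yr (t - 1))"
    using \<open>1 \<le> t\<close> by (cases t) auto
  then show ?thesis
    by (simp only:) (rule pa2_step_is_update[OF assms(1,3-5)])
qed

section \<open>The loss bound for one trial\<close>

lemma ord_loss_nonneg: "0 \<le> ord_loss K x yl yr w th i"
  unfolding ord_loss_def by auto

lemma sum_ord_loss_active_set:
  assumes "1 \<le> yr" "yl \<le> K"
  shows "(\<Sum>i=1..K-1. (ord_loss K x yl yr w th i)\<^sup>2) = (\<Sum>i\<in>active_set K yl yr. (ord_loss K x yl yr w th i)\<^sup>2)"
  using active_set_subset[OF assms]
  by (intro sum.mono_neutral_right) (auto simp: ord_loss_def active_set_def)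

lemma ord_loss_le_dist_feasible:
  assumes feas: "pa2_feasible K x yl yr w th xi"
  shows "ord_loss K x yl yr w0 th0 i \<le> norm (w - w0) * norm x + \<bar>th i - th0 i\<bar> + \<bar>xi i\<bar>"
proof -
  have "\<bar>(w - w0) \<bullet> x\<bar> \<le> norm (w - w0) * norm x"
    by (rule Cauchy_Schwarz_ineq2)
  moreover have "w \<bullet> x = w0 \<bullet> x + (w - w0) \<bullet> x"
    by (simp add: inner_diff_left)
  moreover have "1 \<le> i \<and> i \<le> yl - 1 \<Longrightarrow> w \<bullet> x - th i \<ge> 1 - xi i"
    and "yr \<le> i \<and> i \<le> K - 1 \<Longrightarrow> w \<bullet> x - th i \<le> -1 + xi i"
    using feas unfolding pa2_feasible_def by auto
  ultimately show ?thesis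
    unfolding ord_loss_def by (auto simp: abs_le_iff)
qed

lemma ord_loss_sq_le_split:
  assumes "0 < C" "0 < n" and feas: "pa2_feasible K x yl yr w th xi"
  shows "(ord_loss K x yl yr w0 th0 i)\<^sup>2
    \<le> (1 + 1 / (2 * C) + (norm x)\<^sup>2 * n) * ((norm (w - w0))\<^sup>2 / n + (th i - th0 i)\<^sup>2 + 2 * C * (xi i)\<^sup>2)"
proof -
  let ?W = "norm (w - w0)"
  have "(ord_loss K x yl yr w0 th0 i)\<^sup>2 \<le> (?W * norm x + \<bar>th i - th0 i\<bar> + \<bar>xi i\<bar>)\<^sup>2"
    using ord_loss_le_dist_feasible[OF feas] ord_loss_nonneg by (intro power_mono) auto
  also have "\<dots> \<le> (((norm x)\<^sup>2 * n + 1) + 1 / (2 * C)) * ((?W\<^sup>2 / n + (th i - th0 i)\<^sup>2) + 2 * C * (xi i)\<^sup>2)"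
  proof (rule sq_add_le_mult_add)
    show "(?W * norm x + \<bar>th i - th0 i\<bar>)\<^sup>2 \<le> ((norm x)\<^sup>2 * n + 1) * (?W\<^sup>2 / n + (th i - th0 i)\<^sup>2)"
      by (rule sq_add_le_mult_add) (use \<open>0 < n\<close> in \<open>auto simp: power_mult_distrib\<close>)
    show "\<bar>xi i\<bar>\<^sup>2 \<le> 1 / (2 * C) * (2 * C * (xi i)\<^sup>2)"
      using \<open>0 < C\<close> by simp
  qed (use \<open>0 < C\<close> \<open>0 < n\<close> in auto)
  finally show ?thesis
    by (simp add: algebra_simps)
qed

lemma pa2_loss_sum_le_objective:
  assumes "0 < C" "1 \<le> yr" "yl \<le> K" and feas: "pa2_feasible K x yl yr w th xi"
  shows "(\<Sum>i=1..K-1. (ord_loss K x yl yr w0 th0 i)\<^sup>2)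
    \<le> (1 + 1 / (2 * C) + (norm x)\<^sup>2 * card (active_set K yl yr)) * (2 * pa2_objective C K yl yr w0 th0 w th xi)"
proof -
  let ?A = "active_set K yl yr"
  define n where "n = card ?A"
  define W where "W = norm (w - w0)"
  define D where "D = 1 + 1 / (2 * C) + (norm x)\<^sup>2 * n"
  have "0 < n" if "i \<in> ?A" for i
    using that by (auto simp: n_def card_gt_0_iff active_set_def)
  then have per_index: "(ord_loss K x yl yr w0 th0 i)\<^sup>2 \<le> D * (W\<^sup>2 / n + (th i - th0 i)\<^sup>2 + 2 * C * (xi i)\<^sup>2)"
    if "i \<in> ?A" for i
    unfolding D_def W_def using that by (intro ord_loss_sq_le_split[OF \<open>0 < C\<close> _ feas]) auto
  have "(\<Sum>i=1..K-1. (ord_loss K x yl yr w0 th0 i)\<^sup>2) = (\<Sum>i\<in>?A. (ord_loss K x yl yr w0 th0 i)\<^sup>2)"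
    using assms(2,3) by (rule sum_ord_loss_active_set)
  also have "\<dots> \<le> (\<Sum>i\<in>?A. D * (W\<^sup>2 / n + (th i - th0 i)\<^sup>2 + 2 * C * (xi i)\<^sup>2))"
    by (rule sum_mono) (rule per_index)
  also have "\<dots> = D * (\<Sum>i\<in>?A. W\<^sup>2 / n + (th i - th0 i)\<^sup>2 + 2 * C * (xi i)\<^sup>2)"
    by (rule sum_distrib_left[symmetric])
  also have "\<dots> = D * (n * (W\<^sup>2 / n) + (\<Sum>i\<in>?A. (th i - th0 i)\<^sup>2) + 2 * C * (\<Sum>i\<in>?A. (xi i)\<^sup>2))"
    by (simp add: n_def sum.distrib sum_distrib_left)
  also have "\<dots> \<le> D * (2 * pa2_objective C K yl yr w0 th0 w th xi)"
  proof (rule mult_left_mono)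
    have "n * (W\<^sup>2 / n) \<le> W\<^sup>2"
      by (cases "n = 0") simp_all
    moreover have "(\<Sum>i\<in>?A. (th i - th0 i)\<^sup>2) \<le> (\<Sum>i=1..K-1. (th i - th0 i)\<^sup>2)"
      using active_set_subset[OF assms(2,3)] by (intro sum_mono2) auto
    ultimately show "n * (W\<^sup>2 / n) + (\<Sum>i\<in>?A. (th i - th0 i)\<^sup>2) + 2 * C * (\<Sum>i\<in>?A. (xi i)\<^sup>2)
        \<le> 2 * pa2_objective C K yl yr w0 th0 w th xi"
      unfolding pa2_objective_def W_def by simp
    show "0 \<le> D"
      using \<open>0 < C\<close> by (simp add: D_def add_nonneg_nonneg)
  qed
  finally show ?thesis
    unfolding D_def n_def .
qed

lemma pa2_feasible_ord_loss_slack: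
  assumes "1 \<le> yl" "yl \<le> yr" "yr \<le> K"
  shows "pa2_feasible K x yl yr u (\<lambda>i. if i \<in> {1..K-1} then b i else 0) (ord_loss K x yl yr u b)"
  unfolding pa2_feasible_def ord_loss_def using assms by auto

lemma pa2_update_progress:
  assumes "0 < C" "1 \<le> yl" "yl \<le> yr" "yr \<le> K"
    and feas1: "pa2_feasible K x yl yr w1 th1 xi1"
    and min1: "\<forall>w th xi. pa2_feasible K x yl yr w th xi \<longrightarrow>
      pa2_objective C K yl yr w0 th0 w1 th1 xi1 \<le> pa2_objective C K yl yr w0 th0 w th xi"
  shows "2 * pa2_objective C K yl yr w0 th0 w1 th1 xi1
    \<le> (norm (u - w0))\<^sup>2 + thr_sqnorm K (\<lambda>i. b i - th0 i)
      - ((norm (u - w1))\<^sup>2 + thr_sqnorm K (\<lambda>i. b i - th1 i))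
      + 2 * C * (\<Sum>i=1..K-1. (ord_loss K x yl yr u b i)\<^sup>2)"
proof -
  let ?b = "\<lambda>i. if i \<in> {1..K-1} then b i else 0"
  let ?loss = "ord_loss K x yl yr u b"
  let ?d = "pa2_sqdist C K yl yr w1 th1 xi1 u ?b ?loss"
  have "pa2_objective C K yl yr w0 th0 w1 th1 xi1 + ?d / 2 \<le> pa2_objective C K yl yr w0 th0 u ?b ?loss"
    using pa2_minimizer_gap[OF feas1 min1 pa2_feasible_ord_loss_slack[OF assms(2-4)]] .
  then have "2 * pa2_objective C K yl yr w0 th0 w1 th1 xi1 \<le> 2 * pa2_objective C K yl yr w0 th0 u ?b ?loss - ?d"
    by linarith
  also have "\<dots> = (norm (u - w0))\<^sup>2 + thr_sqnorm K (\<lambda>i. b i - th0 i) + 2 * C * (\<Sum>i=1..K-1. (?loss i)\<^sup>2) - ?d"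
    using sum_ord_loss_active_set[of yr yl K x u b] assms(2-4)
    unfolding pa2_objective_def thr_sqnorm_def by simp
  finally have "2 * pa2_objective C K yl yr w0 th0 w1 th1 xi1
      \<le> (norm (u - w0))\<^sup>2 + thr_sqnorm K (\<lambda>i. b i - th0 i) + 2 * C * (\<Sum>i=1..K-1. (?loss i)\<^sup>2) - ?d" .
  moreover have "(norm (u - w1))\<^sup>2 + thr_sqnorm K (\<lambda>i. b i - th1 i) \<le> ?d"
    using \<open>0 < C\<close> unfolding pa2_sqdist_def thr_sqnorm_def by (simp add: sum_nonneg)
  ultimately show ?thesis
    by linarith
qed

lemma pa2_update_loss_bound:
  assumes "0 < C" "1 \<le> yl" "yl \<le> yr" "yr \<le> K"
    and upd: "pa2_is_update C K x yl yr w0 th0 w1 th1"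
    and D: "1 + 1 / (2 * C) + (norm x)\<^sup>2 * card (active_set K yl yr) \<le> D"
  shows "(\<Sum>i=1..K-1. (ord_loss K x yl yr w0 th0 i)\<^sup>2)
    \<le> D * ((norm (u - w0))\<^sup>2 + thr_sqnorm K (\<lambda>i. b i - th0 i)
           - ((norm (u - w1))\<^sup>2 + thr_sqnorm K (\<lambda>i. b i - th1 i))
           + 2 * C * (\<Sum>i=1..K-1. (ord_loss K x yl yr u b i)\<^sup>2))"
proof -
  obtain xi1 where feas1: "pa2_feasible K x yl yr w1 th1 xi1"
    and min1: "\<forall>w th xi. pa2_feasible K x yl yr w th xi \<longrightarrow>
      pa2_objective C K yl yr w0 th0 w1 th1 xi1 \<le> pa2_objective C K yl yr w0 th0 w th xi"
    using upd unfolding pa2_is_update_def by blast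
  let ?f1 = "pa2_objective C K yl yr w0 th0 w1 th1 xi1"
  have "0 \<le> ?f1"
    using \<open>0 < C\<close> unfolding pa2_objective_def by (intro add_nonneg_nonneg mult_nonneg_nonneg sum_nonneg) auto
  have "0 \<le> 1 + 1 / (2 * C) + (norm x)\<^sup>2 * card (active_set K yl yr)"
    using \<open>0 < C\<close> by (simp add: add_nonneg_nonneg)
  then have "0 \<le> D"
    using D by linarith
  have "(\<Sum>i=1..K-1. (ord_loss K x yl yr w0 th0 i)\<^sup>2)
      \<le> (1 + 1 / (2 * C) + (norm x)\<^sup>2 * card (active_set K yl yr)) * (2 * ?f1)"
    using assms(1-4) by (intro pa2_loss_sum_le_objective[OF _ _ _ feas1]) auto
  also have "\<dots> \<le> D * (2 * ?f1)"
    using D \<open>0 \<le> ?f1\<close> by (intro mult_right_mono) auto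
  also have "\<dots> \<le> D * ((norm (u - w0))\<^sup>2 + thr_sqnorm K (\<lambda>i. b i - th0 i)
      - ((norm (u - w1))\<^sup>2 + thr_sqnorm K (\<lambda>i. b i - th1 i))
      + 2 * C * (\<Sum>i=1..K-1. (ord_loss K x yl yr u b i)\<^sup>2))"
    using pa2_update_progress[OF assms(1-4) feas1 min1] \<open>0 \<le> D\<close> by (rule mult_left_mono)
  finally show ?thesis .
qed

lemma sq_norm_mult_card_active_set_le:
  assumes "1 \<le> yl" "yl \<le> yr" "yr \<le> K" "c \<le> yr - yl" and x: "(norm x)\<^sup>2 \<le> R2"
  shows "(norm x)\<^sup>2 * card (active_set K yl yr) \<le> R2 * (real K - real c - 1)"
proof -
  have "card (active_set K yl yr) \<le> card {1..yl-1} + card {yr..K-1}"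
    unfolding active_set_def by (rule card_Un_le)
  with assms(1-4) have "card (active_set K yl yr) + c + 1 \<le> K"
    by simp
  then have "real (card (active_set K yl yr)) \<le> real K - real c - 1"
    by linarith
  with x show ?thesis
    by (intro mult_mono) (auto intro: order_trans[OF zero_le_power2 x])
qed

theorem theorem6:
  fixes xs :: "nat \<Rightarrow> real^'d" and yl yr :: "nat \<Rightarrow> nat"
    and K T :: nat and C :: real
    and u :: "real^'d" and b :: "nat \<Rightarrow> real"
  assumes "C > 0" and "T \<ge> 1"
    and "\<forall>t\<in>{1..T}. 1 \<le> yl t \<and> yl t \<le> yr t \<and> yr t \<le> K"
  defines "c \<equiv> Min ((\<lambda>t. yr t - yl t) ` {1..T})"
    and "R2 \<equiv> Max ((\<lambda>t. (norm (xs t))^2) ` {1..T})"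
  defines "D \<equiv> 1 + 1 / (2 * C) + R2 * (real K - real c - 1)"
  shows "(\<Sum>t=1..T. \<Sum>i=1..K-1.
            (ord_loss K (xs t) (yl t) (yr t)
               (fst (pa2_run C K xs yl yr (t - 1))) (snd (pa2_run C K xs yl yr (t - 1))) i)^2)
         \<le> D * ((norm u)^2 + thr_sqnorm K b
                + 2 * C * (\<Sum>t=1..T. \<Sum>i=1..K-1. (ord_loss K (xs t) (yl t) (yr t) u b i)^2))"
proof -
  let ?w = "\<lambda>t. fst (pa2_run C K xs yl yr t)" and ?th = "\<lambda>t. snd (pa2_run C K xs yl yr t)"
  define V where "V t = (norm (u - ?w t))\<^sup>2 + thr_sqnorm K (\<lambda>i. b i - ?th t i)" for t
  have labels: "1 \<le> yl t" "yl t \<le> yr t" "yr t \<le> K" if "t \<in> {1..T}" for t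
    using assms(3) that by auto
  have D_ge: "1 + 1 / (2 * C) + (norm (xs t))\<^sup>2 * card (active_set K (yl t) (yr t)) \<le> D"
    if "t \<in> {1..T}" for t
  proof -
    have "(norm (xs t))\<^sup>2 * card (active_set K (yl t) (yr t)) \<le> R2 * (real K - real c - 1)"
      using labels[OF that] that
      by (intro sq_norm_mult_card_active_set_le) (auto simp: c_def R2_def intro: Min_le Max_ge)
    then show ?thesis
      unfolding D_def by simp
  qed
  have step: "(\<Sum>i=1..K-1. (ord_loss K (xs t) (yl t) (yr t) (?w (t - 1)) (?th (t - 1)) i)\<^sup>2)
      \<le> D * (V (t - 1) - V t + 2 * C * (\<Sum>i=1..K-1. (ord_loss K (xs t) (yl t) (yr t) u b i)\<^sup>2))"
    if "t \<in> {1..T}" for t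
  proof -
    have "pa2_is_update C K (xs t) (yl t) (yr t) (?w (t - 1)) (?th (t - 1)) (?w t) (?th t)"
      using \<open>C > 0\<close> that labels[OF that] by (intro pa2_run_is_update[where t = t and yl = yl and yr = yr]) auto
    then show ?thesis
      unfolding V_def by (rule pa2_update_loss_bound[OF \<open>C > 0\<close> labels[OF that] _ D_ge[OF that]])
  qed
  have "0 < 1 + 1 / (2 * C) + (norm (xs 1))\<^sup>2 * card (active_set K (yl 1) (yr 1))"
    using \<open>C > 0\<close> by (simp add: add_pos_nonneg)
  then have "0 \<le> D"
    using D_ge[of 1] \<open>T \<ge> 1\<close> by simp
  moreover have "0 \<le> V T" and "V 0 = (norm u)\<^sup>2 + thr_sqnorm K b"
    unfolding V_def thr_sqnorm_def by (simp_all add: sum_nonneg)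
  ultimately show ?thesis
    using sum_le_telescoping[where V = V, OF step] by (simp add: sum_distrib_left)
qed

end
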